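(* Let $H_1, H_2 : L_2 \to L_2$ be operators. Suppose there exist $\mu_1,\mu_2,\gamma_1,\gamma_2\ge 0$ and $\epsilon>0$ such that $H_1$ is incrementally $(\mu_1,\gamma_1)$-dissipative and $H_2$ is $\epsilon$-strongly incrementally $(\mu_2,\gamma_2)$-dissipative. If \[ \mu_1\mu_2<1,\qquad \mu_1\gamma_2<1,\qquad \mu_2\gamma_1<1, \] then the negative feedback interconnection of $H_1$ and $H_2$, i.e. the closed-loop operator $u\mapsto y$ defined by $y\in H_1(e)$, $e = u - w$, $w \in H_2(y)$ (equivalently the relation $(H_1^{-1}+H_2)^{-1}$), maps $L_2$ to $L_2$ and has finite incremental gain from $u$ to $y$: there exists $c<\infty$ such that $\|y_1-y_2\|\le c\|u_1-u_2\|$ for all closed-loop input/output pairs $(u_1,y_1),(u_2,y_2)$.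
   Context: $L_2 = L_2(\mathbb{R}^n)$ is the Hilbert space of square-integrable signals $u:\mathbb{R}_{\ge 0}\to\mathbb{R}^n$ with inner product $\langle u, y\rangle = \int_0^\infty u(t)^\top y(t)\,dt$ and induced norm $\|\cdot\|$. Operators are possibly multi-valued maps identified with their relations $\{(u,y): y\in H(u)\}$; relational operations: $H^{-1}=\{(y,u): y\in H(u)\}$, $H+G = \{(x,y+z) : (x,y)\in H, (x,z)\in G\}$. No causality is assumed or concluded. Definition: for $\mu,\gamma,\epsilon\ge 0$, $H:L_2\to L_2$ is $\epsilon$-strongly incrementally $(\mu,\gamma)$-dissipative if for all $u_1,u_2\in L_2$, $y_1\in H(u_1)$, $y_2\in H(u_2)$, either (i) $\|y_1-y_2\|\le \mu\|u_1-u_2\|$, or both (ii) $\langle u_1-u_2, y_1-y_2\rangle \ge \epsilon\|u_1-u_2\|^2$ and (iii) $\|y_1-y_2\|\le\gamma\|u_1-u_2\|$ hold (or all three hold). If $\epsilon=0$ it is called incrementally $(\mu,\gamma)$-dissipative. *)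

theory Defs
  imports "HOL-Analysis.Analysis"
begin

text \<open>Signals u : R_{>=0} -> R^n are represented as functions real => real^'n;
  only their values on {0..} matter.  The dimension n is the finite index type 'n.\<close>

type_synonym 'n signal = "real \<Rightarrow> real ^ 'n"

definition L2 :: "'n::finite signal set" where
  "L2 = {u. (\<lambda>t. indicator {0..} t *\<^sub>R u t) \<in> borel_measurable lborel \<and>
            integrable lborel (\<lambda>t. indicator {0..} t * (norm (u t))\<^sup>2)}"

definition L2_inner :: "'n::finite signal \<Rightarrow> 'n signal \<Rightarrow> real" where
  "L2_inner u y = (LINT t|lborel. indicator {0..} t * (u t \<bullet> y t))"

definition L2_norm :: "'n::finite signal \<Rightarrow> real" where
  "L2_norm u = sqrt (L2_inner u u)"

definition is_L2_operator :: "('n::finite signal \<times> 'n signal) set \<Rightarrow> bool" where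
  "is_L2_operator H \<longleftrightarrow> H \<subseteq> L2 \<times> L2"

definition strongly_incr_dissipative ::
  "real \<Rightarrow> real \<Rightarrow> real \<Rightarrow> ('n::finite signal \<times> 'n signal) set \<Rightarrow> bool" where
  "strongly_incr_dissipative \<epsilon> \<mu> \<gamma> H \<longleftrightarrow>
     (\<forall>u1 y1 u2 y2. (u1, y1) \<in> H \<longrightarrow> (u2, y2) \<in> H \<longrightarrow>
        L2_norm (y1 - y2) \<le> \<mu> * L2_norm (u1 - u2) \<or>
        (L2_inner (u1 - u2) (y1 - y2) \<ge> \<epsilon> * (L2_norm (u1 - u2))\<^sup>2 \<and>
         L2_norm (y1 - y2) \<le> \<gamma> * L2_norm (u1 - u2)))"

definition incr_dissipative ::
  "real \<Rightarrow> real \<Rightarrow> ('n::finite signal \<times> 'n signal) set \<Rightarrow> bool" where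
  "incr_dissipative \<mu> \<gamma> H \<longleftrightarrow> strongly_incr_dissipative 0 \<mu> \<gamma> H"

definition feedback ::
  "('n::finite signal \<times> 'n signal) set \<Rightarrow> ('n signal \<times> 'n signal) set \<Rightarrow> ('n signal \<times> 'n signal) set" where
  "feedback H1 H2 = {(u, y). \<exists>e w. (e, y) \<in> H1 \<and> e = u - w \<and> (y, w) \<in> H2}"

end

theory Submission
  imports Defs
begin

text \<open>
  Take two closed-loop trajectories and write \<open>\<Delta>u, \<Delta>y, \<Delta>w\<close> for the differences of the
  signals and \<open>\<Delta>e = \<Delta>u - \<Delta>w\<close> for the difference of the errors. Then
  \<open>\<parallel>\<Delta>e\<parallel> \<le> \<parallel>\<Delta>u\<parallel> + \<parallel>\<Delta>w\<parallel>\<close> and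
  \<open>\<langle>\<Delta>e, \<Delta>y\<rangle> + \<langle>\<Delta>y, \<Delta>w\<rangle> = \<langle>\<Delta>u, \<Delta>y\<rangle> \<le> \<parallel>\<Delta>u\<parallel> \<parallel>\<Delta>y\<parallel>\<close>.
  Each operator satisfies either its small-gain or its passivity branch. If at least one
  of them is in its small-gain branch, the loop gain is below one (this is where
  \<open>\<mu>1 \<mu>2, \<mu>1 \<gamma>2, \<mu>2 \<gamma>1 < 1\<close> enter) and closing the loop bounds \<open>\<parallel>\<Delta>y\<parallel>\<close> by a multiple of
  \<open>\<parallel>\<Delta>u\<parallel>\<close>. If both are passive, the inner products give
  \<open>\<epsilon> \<parallel>\<Delta>y\<parallel>\<^sup>2 \<le> \<parallel>\<Delta>u\<parallel> \<parallel>\<Delta>y\<parallel>\<close>.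
\<close>

lemma abs_inner_le_sum_squares:
  fixes a b :: "'a::real_inner"
  shows "\<bar>a \<bullet> b\<bar> \<le> (norm a)\<^sup>2 + (norm b)\<^sup>2"
  using Cauchy_Schwarz_ineq2[of a b] sum_squares_bound[of "norm a" "norm b"]
    mult_nonneg_nonneg[OF norm_ge_zero norm_ge_zero, of a b] by linarith

lemma norm_add_squared_le:
  fixes a b :: "'a::real_normed_vector"
  shows "(norm (a + b))\<^sup>2 \<le> 2 * (norm a)\<^sup>2 + 2 * (norm b)\<^sup>2"
proof -
  have "(norm (a + b))\<^sup>2 \<le> (norm a + norm b)\<^sup>2"
    by (intro power_mono norm_triangle_ineq) simp
  also have "\<dots> \<le> 2 * (norm a)\<^sup>2 + 2 * (norm b)\<^sup>2"
    using sum_squares_bound[of "norm a" "norm b"] by (simp add: power2_sum)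
  finally show ?thesis .
qed

lemma integrable_inner_of_square_integrable:
  fixes f g :: "'a \<Rightarrow> 'b::euclidean_space"
  assumes "f \<in> borel_measurable M" "integrable M (\<lambda>x. (norm (f x))\<^sup>2)"
    and "g \<in> borel_measurable M" "integrable M (\<lambda>x. (norm (g x))\<^sup>2)"
  shows "integrable M (\<lambda>x. f x \<bullet> g x)"
  by (rule Bochner_Integration.integrable_bound[where f = "\<lambda>x. (norm (f x))\<^sup>2 + (norm (g x))\<^sup>2"])
    (use assms abs_inner_le_sum_squares in auto)

lemma square_integrable_add:
  fixes f g :: "'a \<Rightarrow> 'b::euclidean_space"
  assumes "f \<in> borel_measurable M" "integrable M (\<lambda>x. (norm (f x))\<^sup>2)"
    and "g \<in> borel_measurable M" "integrable M (\<lambda>x. (norm (g x))\<^sup>2)"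
  shows "integrable M (\<lambda>x. (norm (f x + g x))\<^sup>2)"
  by (rule Bochner_Integration.integrable_bound
        [where f = "\<lambda>x. 2 * (norm (f x))\<^sup>2 + 2 * (norm (g x))\<^sup>2"])
    (use assms norm_add_squared_le in auto)

definition trunc_nonneg :: "'n::finite signal \<Rightarrow> 'n signal" where
  "trunc_nonneg u = (\<lambda>t. indicator {0..} t *\<^sub>R u t)"

lemma trunc_nonneg_add:
  "trunc_nonneg (\<lambda>t. u t + v t) = (\<lambda>t. trunc_nonneg u t + trunc_nonneg v t)"
  by (simp add: trunc_nonneg_def scaleR_add_right)

lemma trunc_nonneg_diff: "trunc_nonneg (u - v) = (\<lambda>t. trunc_nonneg u t - trunc_nonneg v t)"
  by (simp add: trunc_nonneg_def scaleR_diff_right)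

lemma trunc_nonneg_scaleR: "trunc_nonneg (\<lambda>t. c *\<^sub>R u t) = (\<lambda>t. c *\<^sub>R trunc_nonneg u t)"
  by (simp add: trunc_nonneg_def mult.commute)

lemma L2_iff_trunc_nonneg:
  "u \<in> L2 \<longleftrightarrow> trunc_nonneg u \<in> borel_measurable lborel \<and>
     integrable lborel (\<lambda>t. (norm (trunc_nonneg u t))\<^sup>2)"
proof -
  have "(\<lambda>t. (norm (trunc_nonneg u t))\<^sup>2) = (\<lambda>t. indicator {0..} t * (norm (u t))\<^sup>2)"
    by (auto simp: trunc_nonneg_def indicator_def)
  then show ?thesis by (simp add: L2_def trunc_nonneg_def)
qed

lemma L2_inner_trunc_nonneg: "L2_inner u y = (\<integral>t. trunc_nonneg u t \<bullet> trunc_nonneg y t \<partial>lborel)"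
proof -
  have "(\<lambda>t. indicator {0..} t * (u t \<bullet> y t)) = (\<lambda>t. trunc_nonneg u t \<bullet> trunc_nonneg y t)"
    by (auto simp: trunc_nonneg_def indicator_def)
  then show ?thesis by (simp add: L2_inner_def)
qed

lemma L2_inner_integrable:
  assumes "u \<in> L2" "y \<in> L2"
  shows "integrable lborel (\<lambda>t. trunc_nonneg u t \<bullet> trunc_nonneg y t)"
  using assms by (intro integrable_inner_of_square_integrable) (auto simp: L2_iff_trunc_nonneg)

lemma L2_add:
  assumes "u \<in> L2" "v \<in> L2"
  shows "(\<lambda>t. u t + v t) \<in> L2"
  using assms square_integrable_add[of "trunc_nonneg u" lborel "trunc_nonneg v"]
  by (auto simp: L2_iff_trunc_nonneg trunc_nonneg_add)

lemma L2_scaleR: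
  assumes "u \<in> L2"
  shows "(\<lambda>t. c *\<^sub>R u t) \<in> L2"
  using assms by (auto simp: L2_iff_trunc_nonneg trunc_nonneg_scaleR power_mult_distrib)

lemma L2_diff:
  assumes "u \<in> L2" "v \<in> L2"
  shows "u - v \<in> L2"
proof -
  have "u - v = (\<lambda>t. u t + (-1) *\<^sub>R v t)" by (simp add: fun_eq_iff)
  then show ?thesis using assms L2_add L2_scaleR by metis
qed

lemma L2_inner_commute: "L2_inner u v = L2_inner v u"
  unfolding L2_inner_def by (simp add: inner_commute)

lemma L2_inner_scaleR_left: "L2_inner (\<lambda>t. c *\<^sub>R u t) y = c * L2_inner u y"
  by (simp add: L2_inner_def mult.left_commute)

lemma L2_inner_diff_left:
  assumes "u \<in> L2" "v \<in> L2" "y \<in> L2"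
  shows "L2_inner (u - v) y = L2_inner u y - L2_inner v y"
  unfolding L2_inner_trunc_nonneg trunc_nonneg_diff inner_diff_left
  using assms by (intro Bochner_Integration.integral_diff L2_inner_integrable)

lemma L2_inner_self_nonneg: "L2_inner u u \<ge> 0"
  unfolding L2_inner_trunc_nonneg by (rule Bochner_Integration.integral_nonneg) simp

lemma L2_norm_nonneg: "L2_norm u \<ge> 0"
  unfolding L2_norm_def using L2_inner_self_nonneg[of u] by simp

lemma L2_inner_diff_self:
  assumes "u \<in> L2" "v \<in> L2"
  shows "L2_inner (u - v) (u - v) = L2_inner u u - 2 * L2_inner u v + L2_inner v v"
proof -
  have "L2_inner (u - v) (u - v) = L2_inner u (u - v) - L2_inner v (u - v)"
    by (intro L2_inner_diff_left assms L2_diff)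
  also have "\<dots> = L2_inner (u - v) u - L2_inner (u - v) v"
    by (metis L2_inner_commute)
  also have "\<dots> = L2_inner u u - L2_inner v u - (L2_inner u v - L2_inner v v)"
    using assms by (simp add: L2_inner_diff_left)
  finally show ?thesis
    by (simp add: L2_inner_commute[of v u])
qed

lemma abs_le_sqrt_mult_if_quadratic_nonneg:
  fixes a b p :: real
  assumes quadratic_nonneg: "\<And>s. 0 \<le> s\<^sup>2 * a - 2 * s * p + b" and "a \<ge> 0" "b \<ge> 0"
  shows "\<bar>p\<bar> \<le> sqrt a * sqrt b"
proof (cases "a = 0")
  case True
  have "p = 0"
  proof (rule ccontr)
    assume "p \<noteq> 0"
    have "0 \<le> ((b + 1) / (2 * p))\<^sup>2 * a - 2 * ((b + 1) / (2 * p)) * p + b"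
      by (rule quadratic_nonneg)
    then show False using True \<open>p \<noteq> 0\<close> by (simp add: field_simps)
  qed
  then show ?thesis using assms by simp
next
  case False
  then have "a > 0" using assms by simp
  have "0 \<le> (p / a)\<^sup>2 * a - 2 * (p / a) * p + b" by (rule quadratic_nonneg)
  then have "p\<^sup>2 \<le> a * b" using \<open>a > 0\<close> by (simp add: field_simps power2_eq_square)
  then have "sqrt (p\<^sup>2) \<le> sqrt (a * b)" by (rule real_sqrt_le_mono)
  then show ?thesis by (simp add: real_sqrt_mult)
qed

lemma L2_Cauchy_Schwarz:
  assumes "u \<in> L2" "v \<in> L2"
  shows "\<bar>L2_inner u v\<bar> \<le> L2_norm u * L2_norm v"
  unfolding L2_norm_def
proof (intro abs_le_sqrt_mult_if_quadratic_nonneg L2_inner_self_nonneg)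
  fix s :: real
  let ?su = "\<lambda>t. s *\<^sub>R u t"
  have "L2_inner ?su ?su = s * L2_inner ?su u"
    by (metis L2_inner_commute L2_inner_scaleR_left)
  then have "L2_inner ?su ?su = s\<^sup>2 * L2_inner u u"
    by (simp add: L2_inner_scaleR_left power2_eq_square)
  moreover have "L2_inner (?su - v) (?su - v) = L2_inner ?su ?su - 2 * L2_inner ?su v + L2_inner v v"
    using assms by (intro L2_inner_diff_self L2_scaleR)
  ultimately show "0 \<le> s\<^sup>2 * L2_inner u u - 2 * s * L2_inner u v + L2_inner v v"
    using L2_inner_self_nonneg[of "?su - v"] by (simp add: L2_inner_scaleR_left)
qed

lemma L2_norm_diff_le:
  assumes "u \<in> L2" "v \<in> L2"
  shows "L2_norm (u - v) \<le> L2_norm u + L2_norm v"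
proof -
  have "L2_inner (u - v) (u - v) \<le> (L2_norm u)\<^sup>2 + 2 * (L2_norm u * L2_norm v) + (L2_norm v)\<^sup>2"
    using assms L2_Cauchy_Schwarz[OF assms] L2_inner_self_nonneg[of u] L2_inner_self_nonneg[of v]
    by (simp add: L2_inner_diff_self L2_norm_def)
  also have "\<dots> = (L2_norm u + L2_norm v)\<^sup>2"
    by (simp add: power2_sum)
  finally show ?thesis
    unfolding L2_norm_def[of "u - v"]
    using L2_norm_nonneg[of u] L2_norm_nonneg[of v] by (simp add: real_le_lsqrt)
qed

lemma small_gain_bound:
  fixes y e w u a b :: real
  assumes "y \<le> a * e" "e \<le> u + w" "w \<le> b * y" "a \<ge> 0" "a * b < 1"
  shows "y \<le> a / (1 - a * b) * u"
proof -
  have "y \<le> a * u + a * w"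
    using assms(1,4) mult_left_mono[OF assms(2,4)] by (simp add: distrib_left)
  also have "a * w \<le> (a * b) * y"
    using mult_left_mono[OF assms(3,4)] by (simp add: mult.assoc)
  finally have "(1 - a * b) * y \<le> a * u"
    by (simp add: algebra_simps)
  then show ?thesis
    using assms(5) by (simp add: pos_le_divide_eq mult.commute)
qed

lemma passivity_gain_bound:
  fixes y u \<epsilon> :: real
  assumes "\<epsilon> * y\<^sup>2 \<le> u * y" "\<epsilon> > 0" "y \<ge> 0" "u \<ge> 0"
  shows "y \<le> 1 / \<epsilon> * u"
proof (cases "y = 0")
  case False
  with assms have "\<epsilon> * y \<le> u"
    by (simp add: power2_eq_square mult.assoc[symmetric])
  then show ?thesis
    using assms(2) by (simp add: field_simps)
qed (use assms in simp)

text \<open>Any common bound of the four case gains works; their sum is the simplest one.\<close>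

definition loop_gain :: "real \<Rightarrow> real \<Rightarrow> real \<Rightarrow> real \<Rightarrow> real \<Rightarrow> real" where
  "loop_gain \<mu>1 \<mu>2 \<gamma>1 \<gamma>2 \<epsilon> =
     \<mu>1 / (1 - \<mu>1 * \<mu>2) + \<mu>1 / (1 - \<mu>1 * \<gamma>2) + \<gamma>1 / (1 - \<mu>2 * \<gamma>1) + 1 / \<epsilon>"

lemma loop_gain_bound:
  fixes u y e w p1 p2 \<mu>1 \<mu>2 \<gamma>1 \<gamma>2 \<epsilon> :: real
  assumes "u \<ge> 0" "y \<ge> 0"
    and "\<mu>1 \<ge> 0" "\<mu>2 \<ge> 0" "\<gamma>1 \<ge> 0" "\<gamma>2 \<ge> 0" "\<epsilon> > 0"
    and "\<mu>1 * \<mu>2 < 1" "\<mu>1 * \<gamma>2 < 1" "\<mu>2 * \<gamma>1 < 1"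
    and "e \<le> u + w"
    and "y \<le> \<mu>1 * e \<or> (p1 \<ge> 0 \<and> y \<le> \<gamma>1 * e)"
    and "w \<le> \<mu>2 * y \<or> (p2 \<ge> \<epsilon> * y\<^sup>2 \<and> w \<le> \<gamma>2 * y)"
    and "p1 + p2 \<le> u * y"
  shows "y \<le> loop_gain \<mu>1 \<mu>2 \<gamma>1 \<gamma>2 \<epsilon> * u"
proof -
  define k1 k2 k3 k4 where "k1 = \<mu>1 / (1 - \<mu>1 * \<mu>2)" and "k2 = \<mu>1 / (1 - \<mu>1 * \<gamma>2)"
    and "k3 = \<gamma>1 / (1 - \<mu>2 * \<gamma>1)" and "k4 = 1 / \<epsilon>"
  have "k1 \<ge> 0" "k2 \<ge> 0" "k3 \<ge> 0" "k4 \<ge> 0"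
    unfolding k1_def k2_def k3_def k4_def using assms(3-10) by (auto intro: divide_nonneg_pos)
  then have "k1 * u \<ge> 0" "k2 * u \<ge> 0" "k3 * u \<ge> 0" "k4 * u \<ge> 0"
    using assms(1) by simp_all
  moreover have "y \<le> k1 * u \<or> y \<le> k2 * u \<or> y \<le> k3 * u \<or> y \<le> k4 * u"
    using assms(12,13)
  proof (elim disjE conjE)
    assume "y \<le> \<mu>1 * e" "w \<le> \<mu>2 * y"
    then show ?thesis unfolding k1_def using small_gain_bound assms by blast
  next
    assume "y \<le> \<mu>1 * e" "w \<le> \<gamma>2 * y"
    then show ?thesis unfolding k2_def using small_gain_bound assms by blast
  next
    assume "y \<le> \<gamma>1 * e" "w \<le> \<mu>2 * y"
    moreover have "\<gamma>1 * \<mu>2 < 1" using assms(10) by (simp add: mult.commute)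
    ultimately have "y \<le> \<gamma>1 / (1 - \<gamma>1 * \<mu>2) * u" using small_gain_bound assms by blast
    then show ?thesis unfolding k3_def by (simp add: mult.commute)
  next
    assume "p1 \<ge> 0" "p2 \<ge> \<epsilon> * y\<^sup>2"
    then have "\<epsilon> * y\<^sup>2 \<le> u * y" using assms(14) by linarith
    then show ?thesis unfolding k4_def using passivity_gain_bound assms by blast
  qed
  ultimately have "y \<le> k1 * u + k2 * u + k3 * u + k4 * u"
    by linarith
  then show ?thesis
    by (simp add: loop_gain_def k1_def k2_def k3_def k4_def distrib_right)
qed

lemma feedback_is_L2_operator:
  assumes "is_L2_operator H1" "is_L2_operator H2"
  shows "is_L2_operator (feedback H1 H2)"
  unfolding is_L2_operator_def
proof clarify
  fix u y
  assume "(u, y) \<in> feedback H1 H2"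
  then obtain w where "(u - w, y) \<in> H1" "(y, w) \<in> H2"
    by (auto simp: feedback_def)
  then have "u - w \<in> L2" "w \<in> L2" "y \<in> L2"
    using assms by (auto simp: is_L2_operator_def)
  moreover have "u = (\<lambda>t. (u - w) t + w t)"
    by (simp add: fun_eq_iff)
  ultimately show "u \<in> L2 \<and> y \<in> L2"
    by (metis L2_add)
qed

lemma feedback_incremental_gain:
  assumes "is_L2_operator H1" "is_L2_operator H2"
    and "\<mu>1 \<ge> 0" "\<mu>2 \<ge> 0" "\<gamma>1 \<ge> 0" "\<gamma>2 \<ge> 0" "\<epsilon> > 0"
    and "incr_dissipative \<mu>1 \<gamma>1 H1" "strongly_incr_dissipative \<epsilon> \<mu>2 \<gamma>2 H2"
    and "\<mu>1 * \<mu>2 < 1" "\<mu>1 * \<gamma>2 < 1" "\<mu>2 * \<gamma>1 < 1"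
    and "(u1, y1) \<in> feedback H1 H2" "(u2, y2) \<in> feedback H1 H2"
  shows "L2_norm (y1 - y2) \<le> loop_gain \<mu>1 \<mu>2 \<gamma>1 \<gamma>2 \<epsilon> * L2_norm (u1 - u2)"
proof -
  obtain w1 w2 where H1: "(u1 - w1, y1) \<in> H1" "(u2 - w2, y2) \<in> H1"
    and H2: "(y1, w1) \<in> H2" "(y2, w2) \<in> H2"
    using assms(13,14) by (auto simp: feedback_def)
  have "u1 \<in> L2" "u2 \<in> L2"
    using assms(13,14) feedback_is_L2_operator[OF assms(1,2)] by (auto simp: is_L2_operator_def)
  moreover have "y1 \<in> L2" "y2 \<in> L2" "w1 \<in> L2" "w2 \<in> L2"
    using H2 assms(2) by (auto simp: is_L2_operator_def)
  ultimately have L2: "u1 - u2 \<in> L2" "y1 - y2 \<in> L2" "w1 - w2 \<in> L2"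
    by (simp_all add: L2_diff)
  have de: "(u1 - w1) - (u2 - w2) = (u1 - u2) - (w1 - w2)"
    by (simp add: fun_eq_iff)
  have "L2_norm (y1 - y2) \<le> \<mu>1 * L2_norm ((u1 - u2) - (w1 - w2)) \<or>
      (L2_inner ((u1 - u2) - (w1 - w2)) (y1 - y2) \<ge> 0 \<and>
       L2_norm (y1 - y2) \<le> \<gamma>1 * L2_norm ((u1 - u2) - (w1 - w2)))"
    using assms(8) H1 unfolding incr_dissipative_def strongly_incr_dissipative_def de[symmetric] by fastforce
  moreover have "L2_norm (w1 - w2) \<le> \<mu>2 * L2_norm (y1 - y2) \<or>
      (L2_inner (y1 - y2) (w1 - w2) \<ge> \<epsilon> * (L2_norm (y1 - y2))\<^sup>2 \<and>
       L2_norm (w1 - w2) \<le> \<gamma>2 * L2_norm (y1 - y2))"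
    using assms(9) H2 unfolding strongly_incr_dissipative_def by blast
  moreover have "L2_inner ((u1 - u2) - (w1 - w2)) (y1 - y2) + L2_inner (y1 - y2) (w1 - w2)
      = L2_inner (u1 - u2) (y1 - y2)"
    using L2 by (simp add: L2_inner_diff_left L2_inner_commute[of "y1 - y2"])
  moreover have "L2_inner (u1 - u2) (y1 - y2) \<le> L2_norm (u1 - u2) * L2_norm (y1 - y2)"
    using L2_Cauchy_Schwarz[OF L2(1,2)] by linarith
  ultimately show ?thesis
    using assms(3-7,10-12) L2_norm_diff_le[OF L2(1,3)]
    by (intro loop_gain_bound[where e = "L2_norm ((u1 - u2) - (w1 - w2))"
          and w = "L2_norm (w1 - w2)"]) (auto simp: L2_norm_nonneg)
qed

theorem theorem1:
  fixes H1 H2 :: "('n::finite signal \<times> 'n signal) set"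
    and \<mu>1 \<mu>2 \<gamma>1 \<gamma>2 \<epsilon> :: real
  assumes "is_L2_operator H1" and "is_L2_operator H2"
    and "\<mu>1 \<ge> 0" and "\<mu>2 \<ge> 0" and "\<gamma>1 \<ge> 0" and "\<gamma>2 \<ge> 0" and "\<epsilon> > 0"
    and "incr_dissipative \<mu>1 \<gamma>1 H1"
    and "strongly_incr_dissipative \<epsilon> \<mu>2 \<gamma>2 H2"
    and "\<mu>1 * \<mu>2 < 1" and "\<mu>1 * \<gamma>2 < 1" and "\<mu>2 * \<gamma>1 < 1"
  shows "is_L2_operator (feedback H1 H2) \<and>
         (\<exists>c. \<forall>u1 y1 u2 y2. (u1, y1) \<in> feedback H1 H2 \<longrightarrow> (u2, y2) \<in> feedback H1 H2 \<longrightarrow>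
              L2_norm (y1 - y2) \<le> c * L2_norm (u1 - u2))"
  using feedback_is_L2_operator[OF assms(1,2)] feedback_incremental_gain[OF assms]
  by blast

end
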